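(* Let $\mu$ be a stationary ergodic, elliptic and non-degenerate probability measure on $\Omega$ with $\mathbb P^1(S_+)>0$. Then for every $\epsilon>0$ there is $y\in\mathbb Z_+$ with $\mathbb P^y(S_+)>1-\epsilon$.
   Context: Notation: $\mathbb N=\{1,2,\dots\}$, $\mathbb Z_+=\{0,1,2,\dots\}$. Cookie environments $\omega\in\Omega=[0,1]^{\mathbb Z\times\mathbb N}$; shift $(\theta\omega)(x,n)=\omega(x+1,n)$; $\mu$ stationary ergodic means $\theta$-invariant and ergodic; elliptic means $\mu((0,1)^{\mathbb Z\times\mathbb N})=1$. Random arrow environment: $a(x,n)=\mathbf 1_{\{u(x,n)<\omega(x,n)\}}$ with $u(x,n)$ i.i.d. Uniform$[0,1]$ independent of $\omega\sim\mu$; $\mathbb P$ denotes the joint law of $(\omega,u)$. A sequence $b\in\{0,1\}^{\mathbb N}$ is non-degenerate if $b(i)\ne b(i+1)$ for infinitely many $i$; $\mu$ is non-degenerate if $\mathbb P$-a.s. every $a(x,\cdot)$ is non-degenerate. For non-degenerate $b$: $U^+_b(0)=0$ and for $x\ge1$, $U^+_b(x)$ is the number of indices $i$ with $b(i)=1$ preceding the $x$-th index $j$ with $b(j)=0$. For $y\in\mathbb Z_+$: $Z^+_0=y$, $Z^+_n=U^+_{a(n-1,\cdot)}(Z^+_{n-1})$. $\mathbb P^y$ denotes $\mathbb P$ applied to events about $Z^+$ with initial value $y$. $S_+=\{Z^+_n>0\ \forall n\ge0\}$. *)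

theory Defs
  imports "HOL-Probability.Probability" "HOL-Library.Infinite_Set"
begin

text \<open>Cookie environments. Cookie index is 0-based: coordinate (x, n) with n :: nat
  represents the paper's cookie number n+1 at site x.\<close>

definition Omega_M :: "((int \<times> nat) \<Rightarrow> real) measure" where
  "Omega_M = PiM UNIV (\<lambda>_. restrict_space borel {0..1::real})"

definition shift :: "((int \<times> nat) \<Rightarrow> real) \<Rightarrow> ((int \<times> nat) \<Rightarrow> real)" where
  "shift \<omega> = (\<lambda>(x, n). \<omega> (x + 1, n))"

definition stationary :: "((int \<times> nat) \<Rightarrow> real) measure \<Rightarrow> bool" where
  "stationary \<mu> \<longleftrightarrow> sets \<mu> = sets Omega_M \<and> distr \<mu> Omega_M shift = \<mu>"

definition ergodic :: "((int \<times> nat) \<Rightarrow> real) measure \<Rightarrow> bool" where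
  "ergodic \<mu> \<longleftrightarrow> (\<forall>A\<in>sets \<mu>. shift -` A \<inter> space \<mu> = A \<longrightarrow>
      measure \<mu> A = 0 \<or> measure \<mu> A = 1)"

definition elliptic :: "((int \<times> nat) \<Rightarrow> real) measure \<Rightarrow> bool" where
  "elliptic \<mu> \<longleftrightarrow>
     measure \<mu> {\<omega> \<in> space \<mu>. \<forall>x n. 0 < \<omega> (x, n) \<and> \<omega> (x, n) < 1} = 1"

definition U_M :: "((int \<times> nat) \<Rightarrow> real) measure" where
  "U_M = PiM UNIV (\<lambda>_. uniform_measure lborel {0..1::real})"

definition joint :: "((int \<times> nat) \<Rightarrow> real) measure \<Rightarrow>
    (((int \<times> nat) \<Rightarrow> real) \<times> ((int \<times> nat) \<Rightarrow> real)) measure" where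
  "joint \<mu> = \<mu> \<Otimes>\<^sub>M U_M"

text \<open>Arrow environment a(x,n) = 1 iff u(x,n) < omega(x,n); True encodes 1.\<close>

definition arrow :: "((int \<times> nat) \<Rightarrow> real) \<Rightarrow> ((int \<times> nat) \<Rightarrow> real) \<Rightarrow> int \<Rightarrow> nat \<Rightarrow> bool" where
  "arrow \<omega> u x n \<longleftrightarrow> u (x, n) < \<omega> (x, n)"

definition nondegenerate_seq :: "(nat \<Rightarrow> bool) \<Rightarrow> bool" where
  "nondegenerate_seq b \<longleftrightarrow> infinite {i. b i \<noteq> b (Suc i)}"

definition nondegenerate :: "((int \<times> nat) \<Rightarrow> real) measure \<Rightarrow> bool" where
  "nondegenerate \<mu> \<longleftrightarrow>
     (AE p in joint \<mu>. \<forall>x. nondegenerate_seq (arrow (fst p) (snd p) x))"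

text \<open>U^+_b(x): for x \<ge> 1, the number of indices i with b i preceding the x-th index j
  with \<not> b j (the x-th zero is enumerate {j. \<not> b j} (x - 1)).\<close>

definition Uplus :: "(nat \<Rightarrow> bool) \<Rightarrow> nat \<Rightarrow> nat" where
  "Uplus b x = (if x = 0 then 0 else card {i. i < enumerate {j. \<not> b j} (x - 1) \<and> b i})"

primrec Zplus :: "((int \<times> nat) \<Rightarrow> real) \<Rightarrow> ((int \<times> nat) \<Rightarrow> real) \<Rightarrow> nat \<Rightarrow> nat \<Rightarrow> nat" where
  "Zplus \<omega> u y 0 = y"
| "Zplus \<omega> u y (Suc n) = Uplus (arrow \<omega> u (int n)) (Zplus \<omega> u y n)"

definition PS :: "((int \<times> nat) \<Rightarrow> real) measure \<Rightarrow> nat \<Rightarrow> real" where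
  "PS \<mu> y = measure (joint \<mu>) {p \<in> space (joint \<mu>). \<forall>n. 0 < Zplus (fst p) (snd p) y n}"

end

theory Submission
  imports Defs
begin

text \<open>For a fixed arrow field, Z^+ is monotone in its initial value, absorbed at 0, and by
  non-degeneracy a large enough initial value keeps it positive up to any given time K. Hence if
  the restart from 1 at some site k \<le> K survives, so does the process from a large y
  (coupling). By stationarity every restart survives with probability P^1(S_+) > 0, so restarts
  survive from infinitely many sites with positive probability; for a fixed environment this is a
  tail event of the independent uniforms, so Kolmogorov's 0-1 law and ergodicity raise this
  probability to 1. Choosing K and then y makes P^y(S_+) as close to 1 as desired.\<close>

section \<open>The process driven by a fixed arrow field\<close>

primrec Zplus_field :: "(int \<Rightarrow> nat \<Rightarrow> bool) \<Rightarrow> nat \<Rightarrow> nat \<Rightarrow> nat" where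
  "Zplus_field a y 0 = y"
| "Zplus_field a y (Suc n) = Uplus (a (int n)) (Zplus_field a y n)"

lemma Zplus_eq_Zplus_field: "Zplus \<omega> u y n = Zplus_field (arrow \<omega> u) y n"
  by (induction n) auto

lemma Zplus_field_add:
  "Zplus_field a y (k + n) = Zplus_field (\<lambda>x. a (x + int k)) (Zplus_field a y k) n"
  by (induction n) (auto simp: add.commute)

lemma Zplus_field_0: "Zplus_field a 0 n = 0"
  by (induction n) (auto simp: Uplus_def)

lemma Zplus_field_absorbing:
  assumes "Zplus_field a y k = 0" "k \<le> n"
  shows "Zplus_field a y n = 0"
proof -
  obtain d where "n = k + d" using assms(2) by (metis le_add_diff_inverse)
  then show ?thesis using assms(1) by (simp add: Zplus_field_add Zplus_field_0)
qed

lemma cofinite_imp_finite_changes: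
  assumes "finite {j. \<not> c j}"
  shows "finite {i. c i \<noteq> c (Suc i)}"
proof -
  have "finite (Suc -` {j. \<not> c j})" using assms by (intro finite_vimageI) auto
  then have "finite ({j. \<not> c j} \<union> Suc -` {j. \<not> c j})" using assms by blast
  then show ?thesis by (rule finite_subset[rotated]) auto
qed

lemma nondegenerate_seq_infinite:
  assumes "nondegenerate_seq b"
  shows "infinite {j. b j}" and "infinite {j. \<not> b j}"
proof -
  have changes: "infinite {i. b i \<noteq> b (Suc i)}"
    using assms by (simp add: nondegenerate_seq_def)
  then show "infinite {j. \<not> b j}" using cofinite_imp_finite_changes by blast
  show "infinite {j. b j}"
    using changes cofinite_imp_finite_changes[of "\<lambda>j. \<not> b j"] by auto
qed

lemma Uplus_mono:
  assumes "infinite {j. \<not> b j}" "x \<le> x'"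
  shows "Uplus b x \<le> Uplus b x'"
proof (cases "x = 0")
  case False
  let ?Z = "{j. \<not> b j}"
  have "enumerate ?Z (x - 1) \<le> enumerate ?Z (x' - 1)"
    using assms enumerate_mono[of "x - 1" "x' - 1" ?Z] by (cases "x = x'") auto
  then have "{i. i < enumerate ?Z (x - 1) \<and> b i} \<subseteq> {i. i < enumerate ?Z (x' - 1) \<and> b i}"
    by auto
  then show ?thesis using False assms(2) by (simp add: Uplus_def card_mono)
qed (simp add: Uplus_def)

lemma Uplus_unbounded:
  assumes "nondegenerate_seq b"
  shows "\<exists>x. m \<le> Uplus b x"
proof -
  let ?Z = "{j. \<not> b j}"
  obtain X where X: "X \<subseteq> {j. b j}" "finite X" "card X = m"
    using nondegenerate_seq_infinite(1)[OF assms] infinite_arbitrarily_large by blast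
  obtain N where N: "X \<subseteq> {..<N}" using finite_nat_bounded[OF X(2)] by blast
  have "N \<le> enumerate ?Z N" using nondegenerate_seq_infinite(2)[OF assms] le_enumerate by blast
  then have "X \<subseteq> {i. i < enumerate ?Z N \<and> b i}" using X N by auto
  then have "m \<le> card {i. i < enumerate ?Z N \<and> b i}"
    using X by (metis card_mono finite_Collect_conjI finite_Collect_less_nat)
  then have "m \<le> Uplus b (Suc N)" by (simp add: Uplus_def)
  then show ?thesis by blast
qed

lemma Zplus_field_mono:
  assumes "\<forall>x. nondegenerate_seq (a x)" "y \<le> y'"
  shows "Zplus_field a y n \<le> Zplus_field a y' n"
  using assms by (induction n) (auto intro!: Uplus_mono dest: nondegenerate_seq_infinite)

lemma Zplus_field_eventually_ge:
  assumes "\<forall>x. nondegenerate_seq (a x)"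
  shows "\<exists>Y. \<forall>y\<ge>Y. m \<le> Zplus_field a y n"
proof -
  have "\<exists>Y. m \<le> Zplus_field a Y n" for m
  proof (induction n arbitrary: m)
    case (Suc n)
    obtain x where x: "m \<le> Uplus (a (int n)) x" using Uplus_unbounded assms by blast
    obtain Y where Y: "x \<le> Zplus_field a Y n" using Suc by blast
    have "Uplus (a (int n)) x \<le> Uplus (a (int n)) (Zplus_field a Y n)"
      using Y assms by (intro Uplus_mono) (auto dest: nondegenerate_seq_infinite)
    then show ?case using x by (intro exI[of _ Y]) auto
  qed auto
  then show ?thesis using Zplus_field_mono[OF assms] by (meson order_trans)
qed

text \<open>Coupling: alive at time K forces value \<ge> 1 at time k, so by monotonicity in the initial
  value the process dominates the restart from 1 at site k.\<close>

lemma Zplus_field_survives_by_comparison: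
  assumes "\<forall>x. nondegenerate_seq (a x)" "k \<le> K" "0 < Zplus_field a y K"
    and restart: "\<forall>n. 0 < Zplus_field (\<lambda>x. a (x + int k)) 1 n"
  shows "0 < Zplus_field a y n"
proof -
  have "Zplus_field a y k \<noteq> 0"
    using assms(2,3) Zplus_field_absorbing[of a y k K] by auto
  then have alive: "1 \<le> Zplus_field a y k" by simp
  show ?thesis
  proof (cases "k \<le> n")
    case True
    then obtain d where d: "n = k + d" by (metis le_add_diff_inverse)
    have "Zplus_field (\<lambda>x. a (x + int k)) 1 d \<le> Zplus_field a y n"
      unfolding d Zplus_field_add using assms(1) alive by (intro Zplus_field_mono) auto
    then show ?thesis using restart by (metis gr0I le_zero_eq not_gr_zero)
  next
    case False
    then show ?thesis using alive Zplus_field_absorbing[of a y n k] by fastforce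
  qed
qed

section \<open>Measurability\<close>

lemma measurable_enumerate:
  fixes S :: "'a \<Rightarrow> nat set"
  assumes "\<And>j. Measurable.pred M (\<lambda>p. j \<in> S p)"
  shows "(\<lambda>p. enumerate (S p) k) \<in> M \<rightarrow>\<^sub>M count_space UNIV"
  using assms
proof (induction k arbitrary: S)
  case 0
  then show ?case unfolding enumerate_0
    by (intro measurable_Least[where P="\<lambda>i p. i \<in> S p"]) (simp add: pred_def)
next
  case (Suc k)
  have "Measurable.pred M (\<lambda>p. j \<in> S p - {LEAST n. n \<in> S p})" for j
    using Suc.prems by measurable
  then show ?case using Suc.IH by (simp add: enumerate_Suc)
qed

lemma measurable_Uplus:
  assumes "\<And>j. Measurable.pred M (\<lambda>p. b p j)"
  shows "(\<lambda>p. Uplus (b p) x) \<in> M \<rightarrow>\<^sub>M count_space UNIV"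
proof -
  have [measurable]: "(\<lambda>p. enumerate {j. \<not> b p j} (x - 1)) \<in> M \<rightarrow>\<^sub>M count_space UNIV"
    using assms by (intro measurable_enumerate) measurable
  show ?thesis unfolding Uplus_def using assms by measurable
qed

lemma measurable_Zplus_field:
  assumes "\<And>x j. 0 \<le> x \<Longrightarrow> Measurable.pred M (\<lambda>p. a p x j)"
  shows "(\<lambda>p. Zplus_field (a p) y n) \<in> M \<rightarrow>\<^sub>M count_space UNIV"
proof (induction n)
  case (Suc n)
  have "(\<lambda>p. Uplus (a p (int n)) z) \<in> M \<rightarrow>\<^sub>M count_space UNIV" for z
    by (rule measurable_Uplus) (rule assms, simp)
  from measurable_compose_countable[where f="\<lambda>z p. Uplus (a p (int n)) z", OF this Suc]
  show ?case by simp
qed simp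

lemma pred_survives:
  assumes "\<And>x j. 0 \<le> x \<Longrightarrow> Measurable.pred M (\<lambda>p. a p x j)"
  shows "Measurable.pred M (\<lambda>p. \<forall>n. 0 < Zplus_field (a p) 1 n)"
proof (rule pred_intros_countable)
  fix n
  have [measurable]: "(\<lambda>p. Zplus_field (a p) 1 n) \<in> M \<rightarrow>\<^sub>M count_space UNIV"
    using assms by (rule measurable_Zplus_field)
  show "Measurable.pred M (\<lambda>p. 0 < Zplus_field (a p) 1 n)" by measurable
qed

text \<open>Survival of restarts from infinitely many sites only involves the arrows right of any
  given site s; this is what makes it a tail event.\<close>

lemma pred_survives_infinitely_often:
  assumes "\<And>x j. int s \<le> x \<Longrightarrow> Measurable.pred M (\<lambda>p. a p x j)"
  shows "Measurable.pred M (\<lambda>p. \<forall>m. \<exists>k\<ge>m. \<forall>n. 0 < Zplus_field (\<lambda>x. a p (x + int k)) 1 n)"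
proof -
  have eq: "(\<forall>m. \<exists>k\<ge>m. Q k) \<longleftrightarrow> (\<forall>m. \<exists>k. m + s \<le> k \<and> Q k)" for Q :: "nat \<Rightarrow> bool"
    by (metis le_add1 order_trans)
  have "Measurable.pred M (\<lambda>p. m + s \<le> k \<and> (\<forall>n. 0 < Zplus_field (\<lambda>x. a p (x + int k)) 1 n))"
    for m k
  proof (cases "m + s \<le> k")
    case True
    have "Measurable.pred M (\<lambda>p. \<forall>n. 0 < Zplus_field (\<lambda>x. a p (x + int k)) 1 n)"
      by (rule pred_survives[where a="\<lambda>p x. a p (x + int k)"]) (rule assms, use True in auto)
    then show ?thesis using True by simp
  qed simp
  then have "Measurable.pred M
      (\<lambda>p. \<forall>m. \<exists>k. m + s \<le> k \<and> (\<forall>n. 0 < Zplus_field (\<lambda>x. a p (x + int k)) 1 n))"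
    by (intro pred_intros_countable)
  then show ?thesis unfolding eq .
qed

section \<open>Shifts and Kolmogorov's 0-1 law for restarts\<close>

definition shift_by :: "int \<Rightarrow> ((int \<times> nat) \<Rightarrow> real) \<Rightarrow> ((int \<times> nat) \<Rightarrow> real)" where
  "shift_by k \<omega> = (\<lambda>(x, n). \<omega> (x + k, n))"

lemma shift_eq_shift_by: "shift = shift_by 1"
  by (auto simp: shift_def shift_by_def fun_eq_iff)

lemma shift_by_shift_by: "shift_by k (shift_by l \<omega>) = shift_by (k + l) \<omega>"
  by (auto simp: shift_by_def fun_eq_iff ac_simps)

lemma shift_by_0: "shift_by 0 = id"
  by (auto simp: shift_by_def fun_eq_iff)

lemma shift_by_restrict: "shift_by k = (\<lambda>\<omega>. \<lambda>i\<in>UNIV. \<omega> ((\<lambda>(x, n). (x + k, n)) i))"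
  by (auto simp: shift_by_def fun_eq_iff)

lemma arrow_shift_by: "arrow (shift_by k \<omega>) (shift_by k u) x j = arrow \<omega> u (x + k) j"
  by (simp add: arrow_def shift_by_def)

lemma prob_space_uniform_01: "prob_space (uniform_measure lborel {0..1::real})"
  by (rule prob_space_uniform_measure) auto

lemma prob_space_U_M: "prob_space U_M"
  unfolding U_M_def by (rule prob_space_PiM) (rule prob_space_uniform_01)

lemma space_U_M: "space U_M = UNIV"
  unfolding U_M_def by (simp add: space_PiM)

lemma measurable_shift_by_U_M: "shift_by k \<in> U_M \<rightarrow>\<^sub>M U_M"
  unfolding shift_by_restrict U_M_def
  by (intro measurable_restrict) (auto intro!: measurable_component_singleton)

lemma measurable_shift_by_Omega_M: "shift_by k \<in> Omega_M \<rightarrow>\<^sub>M Omega_M"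
  unfolding shift_by_restrict Omega_M_def
  by (intro measurable_restrict) (auto intro!: measurable_component_singleton)

lemma measurable_component_Omega_M: "(\<lambda>\<omega>. \<omega> i) \<in> Omega_M \<rightarrow>\<^sub>M borel"
proof -
  have "(\<lambda>\<omega>. \<omega> i) \<in> Omega_M \<rightarrow>\<^sub>M restrict_space borel {0..1::real}"
    unfolding Omega_M_def by (rule measurable_component_singleton) simp
  then show ?thesis by (simp add: measurable_restrict_space2_iff)
qed

lemma measurable_component_U_M: "(\<lambda>u. u i) \<in> U_M \<rightarrow>\<^sub>M borel"
proof -
  have "(\<lambda>u. u i) \<in> U_M \<rightarrow>\<^sub>M uniform_measure lborel {0..1::real}"
    unfolding U_M_def by (rule measurable_component_singleton) simp
  moreover have "measurable U_M (uniform_measure lborel {0..1::real}) = measurable U_M borel"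
    by (rule measurable_cong_sets) auto
  ultimately show ?thesis by simp
qed

lemma distr_shift_by_U_M: "distr U_M U_M (shift_by k) = U_M"
proof -
  let ?I = "uniform_measure lborel {0..1::real}" and ?t = "\<lambda>(x, n). (x + k, n)"
  have "distr (\<Pi>\<^sub>M i\<in>UNIV. ?I) (\<Pi>\<^sub>M i\<in>UNIV. (\<lambda>_. ?I) (?t i)) (\<lambda>\<omega>. \<lambda>n\<in>UNIV. \<omega> (?t n))
      = (\<Pi>\<^sub>M i\<in>UNIV. (\<lambda>_. ?I) (?t i))"
    by (rule distr_PiM_reindex) (auto simp: prob_space_uniform_01 inj_on_def)
  then show ?thesis unfolding U_M_def shift_by_restrict by simp
qed

lemma emeasure_U_M_vimage_shift_by:
  "B \<in> sets U_M \<Longrightarrow> emeasure U_M (shift_by k -` B) = emeasure U_M B"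
  using emeasure_distr[OF measurable_shift_by_U_M, of B k] distr_shift_by_U_M[of k]
  by (simp add: space_U_M)

definition survive_from :: "((int \<times> nat) \<Rightarrow> real) \<Rightarrow> nat \<Rightarrow> ((int \<times> nat) \<Rightarrow> real) set" where
  "survive_from \<omega> k = {u. \<forall>n. 0 < Zplus_field (\<lambda>x. arrow \<omega> u (x + int k)) 1 n}"

definition survive_io :: "((int \<times> nat) \<Rightarrow> real) \<Rightarrow> ((int \<times> nat) \<Rightarrow> real) set" where
  "survive_io \<omega> = {u. \<forall>m. \<exists>k\<ge>m. u \<in> survive_from \<omega> k}"

lemma pred_arrow_U_M: "Measurable.pred U_M (\<lambda>u. arrow \<omega> u x j)"
  unfolding arrow_def pred_def by (rule borel_measurable_less) (auto intro: measurable_component_U_M)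

lemma sets_survive_from: "survive_from \<omega> k \<in> sets U_M"
proof -
  have "Measurable.pred U_M (\<lambda>u. \<forall>n. 0 < Zplus_field (\<lambda>x. arrow \<omega> u (x + int k)) 1 n)"
    by (rule pred_survives) (rule pred_arrow_U_M)
  then show ?thesis unfolding pred_def survive_from_def space_U_M by simp
qed

lemma sets_survive_io: "survive_io \<omega> \<in> sets U_M"
proof -
  have "Measurable.pred U_M (\<lambda>u. \<forall>m. \<exists>k\<ge>m. \<forall>n. 0 < Zplus_field (\<lambda>x. arrow \<omega> u (x + int k)) 1 n)"
    by (rule pred_survives_infinitely_often[where s=0]) (rule pred_arrow_U_M)
  then show ?thesis unfolding pred_def survive_io_def survive_from_def space_U_M by simp
qed

lemma survive_from_shift_by:
  "shift_by (int k) -` survive_from (shift_by (int k) \<omega>) i = survive_from \<omega> (k + i)"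
proof -
  have "(\<lambda>x. arrow (shift_by (int k) \<omega>) (shift_by (int k) u) (x + int i))
      = (\<lambda>x. arrow \<omega> u (x + int (k + i)))" for u
    by (auto simp: arrow_shift_by fun_eq_iff ac_simps)
  then show ?thesis by (auto simp: survive_from_def)
qed

lemma survive_io_shift_by_1: "shift_by 1 -` survive_io (shift_by 1 \<omega>) = survive_io \<omega>"
proof -
  have "shift_by 1 -` survive_io (shift_by 1 \<omega>) = {u. \<forall>m. \<exists>k\<ge>m. u \<in> survive_from \<omega> (Suc k)}"
    using survive_from_shift_by[of 1 \<omega>] unfolding survive_io_def by (auto simp: set_eq_iff)
  also have "\<dots> = survive_io \<omega>"
    unfolding survive_io_def
  proof (intro Collect_cong iffI allI)
    fix u m assume "\<forall>m. \<exists>k\<ge>m. u \<in> survive_from \<omega> (Suc k)"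
    then obtain k where "k \<ge> m" "u \<in> survive_from \<omega> (Suc k)" by blast
    then show "\<exists>k\<ge>m. u \<in> survive_from \<omega> k" by (intro exI[of _ "Suc k"]) auto
  next
    fix u m assume "\<forall>m. \<exists>k\<ge>m. u \<in> survive_from \<omega> k"
    then obtain k where "k \<ge> Suc m" "u \<in> survive_from \<omega> k" by blast
    then show "\<exists>k\<ge>m. u \<in> survive_from \<omega> (Suc k)" by (intro exI[of _ "k - 1"]) auto
  qed
  finally show ?thesis .
qed

definition coord_sigma :: "(int \<times> nat) \<Rightarrow> ((int \<times> nat) \<Rightarrow> real) set set" where
  "coord_sigma i = sigma_sets UNIV {(\<lambda>u. u i) -` A \<inter> UNIV | A. A \<in> sets (borel :: real measure)}"

definition column_sigma :: "nat \<Rightarrow> ((int \<times> nat) \<Rightarrow> real) set set" where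
  "column_sigma x = sigma_sets UNIV (\<Union>j. coord_sigma (int x, j))"

lemma indep_vars_components_U_M: "prob_space.indep_vars U_M (\<lambda>_. borel) (\<lambda>i u. u i) UNIV"
proof -
  interpret U: prob_space U_M by (rule prob_space_U_M)
  let ?I = "uniform_measure lborel {0..1::real}"
  have "sets (\<Pi>\<^sub>M i\<in>(UNIV :: (int \<times> nat) set). (borel :: real measure)) = sets U_M"
    unfolding U_M_def by (rule sets_PiM_cong) auto
  then have joint: "distr U_M (\<Pi>\<^sub>M i\<in>UNIV. borel) (\<lambda>x. \<lambda>i\<in>UNIV. x i) = U_M"
    by (simp add: restrict_UNIV distr_id2)
  have marginal: "distr U_M borel (\<lambda>u. u i) = ?I" for i :: "int \<times> nat"
  proof -
    have "distr U_M borel (\<lambda>u. u i) = distr U_M ?I (\<lambda>u. u i)"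
      by (rule distr_cong) auto
    also have "\<dots> = ?I"
      unfolding U_M_def by (rule distr_PiM_component) (auto simp: prob_space_uniform_01)
    finally show ?thesis .
  qed
  show ?thesis
  proof (subst U.indep_vars_iff_distr_eq_PiM)
    show "distr U_M (Pi\<^sub>M UNIV (\<lambda>_. borel)) (\<lambda>x. \<lambda>i\<in>UNIV. x i)
        = (\<Pi>\<^sub>M i\<in>UNIV. distr U_M borel (\<lambda>u. u i))"
      unfolding joint marginal by (simp add: U_M_def)
  qed (auto intro: measurable_component_U_M)
qed

lemma indep_sets_column_sigma: "prob_space.indep_sets U_M column_sigma UNIV"
proof -
  interpret U: prob_space U_M by (rule prob_space_U_M)
  have "U.indep_sets coord_sigma UNIV"
    using indep_vars_components_U_M unfolding U.indep_vars_def coord_sigma_def space_U_M by simp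
  then have indep: "U.indep_sets coord_sigma (\<Union>x. Pair (int x) ` UNIV)"
    by (rule U.indep_sets_mono_index[rotated]) simp
  have stable: "Int_stable (coord_sigma i)" for i
  proof -
    interpret sigma_algebra UNIV "coord_sigma i"
      unfolding coord_sigma_def by (rule sigma_algebra_sigma_sets) simp
    show ?thesis by (rule Int_stable)
  qed
  have "disjoint_family_on (\<lambda>x::nat. Pair (int x) ` UNIV) UNIV"
    unfolding disjoint_family_on_def by auto
  from U.indep_sets_collect_sigma[OF indep stable this]
  show ?thesis unfolding column_sigma_def space_U_M by (simp add: image_image)
qed

lemma arrow_in_column_sigma:
  assumes "0 \<le> x"
  shows "{u. arrow \<omega> u x j} \<in> column_sigma (nat x)"
proof -
  have "{u. arrow \<omega> u x j} = (\<lambda>u. u (x, j)) -` {..< \<omega> (x, j)} \<inter> UNIV"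
    by (auto simp: arrow_def)
  then have "{u. arrow \<omega> u x j} \<in> coord_sigma (x, j)"
    unfolding coord_sigma_def by (intro sigma_sets.Basic CollectI exI[of _ "{..< \<omega> (x, j)}"]) auto
  then show ?thesis
    unfolding column_sigma_def using assms by (intro sigma_sets.Basic UN_I[of j]) auto
qed

lemma survive_io_tail_event: "survive_io \<omega> \<in> prob_space.tail_events U_M column_sigma"
  unfolding prob_space.tail_events_def[OF prob_space_U_M]
proof (intro InterI, clarify)
  fix s
  let ?N = "sigma (UNIV :: ((int \<times> nat) \<Rightarrow> real) set) (\<Union> (column_sigma ` {s..}))"
  have sets_N: "sets ?N = sigma_sets UNIV (\<Union> (column_sigma ` {s..}))"
    by (rule sets_measure_of) simp
  have space_N: "space ?N = UNIV" by (rule space_measure_of) simp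
  have "Measurable.pred ?N (\<lambda>u. arrow \<omega> u x j)" if "int s \<le> x" for x j
  proof -
    have "{u. arrow \<omega> u x j} \<in> \<Union> (column_sigma ` {s..})"
      using that arrow_in_column_sigma[of x \<omega> j] by (intro UN_I[of "nat x"]) auto
    then show ?thesis unfolding pred_def space_N sets_N by (simp add: sigma_sets.Basic)
  qed
  then have "Measurable.pred ?N
      (\<lambda>u. \<forall>m. \<exists>k\<ge>m. \<forall>n. 0 < Zplus_field (\<lambda>x. arrow \<omega> u (x + int k)) 1 n)"
    by (rule pred_survives_infinitely_often)
  then have "survive_io \<omega> \<in> sets ?N"
    unfolding pred_def survive_io_def survive_from_def space_N by simp
  then show "survive_io \<omega> \<in> sigma_sets (space U_M) (\<Union> (column_sigma ` {s..}))"
    unfolding sets_N space_U_M .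
qed

lemma emeasure_survive_io_0_or_1:
  "emeasure U_M (survive_io \<omega>) = 0 \<or> emeasure U_M (survive_io \<omega>) = 1"
proof -
  interpret U: prob_space U_M by (rule prob_space_U_M)
  have "sigma_algebra (space U_M) (column_sigma x)" for x
    unfolding column_sigma_def space_U_M by (rule sigma_algebra_sigma_sets) simp
  then have "U.prob (survive_io \<omega>) = 0 \<or> U.prob (survive_io \<omega>) = 1"
    using U.kolmogorov_0_1_law indep_sets_column_sigma survive_io_tail_event by blast
  then show ?thesis by (auto simp: U.emeasure_eq_measure)
qed

section \<open>Stationary ergodic environments\<close>

lemma (in prob_space) prob_Int_ge:
  assumes "A \<in> events" "B \<in> events"
  shows "prob A + prob B - 1 \<le> prob (A \<inter> B)"
proof -
  have "prob A + prob B = prob (A \<union> B) + prob (A \<inter> B)"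
    using emeasure_Un_Int[OF assms] by (simp add: emeasure_eq_measure measure_nonneg flip: ennreal_plus)
  then show ?thesis using prob_le_1[of "A \<union> B"] by linarith
qed

locale stationary_ergodic_environment =
  fixes \<mu> :: "((int \<times> nat) \<Rightarrow> real) measure"
  assumes prob_space: "prob_space \<mu>"
    and stationary: "stationary \<mu>"
    and ergodic: "ergodic \<mu>"
    and nondegenerate: "nondegenerate \<mu>"
begin

lemma sets_\<mu>: "sets \<mu> = sets Omega_M"
  using stationary by (simp add: stationary_def)

lemma space_\<mu>: "space \<mu> = space Omega_M"
  using sets_\<mu> by (rule sets_eq_imp_space_eq)

lemma measurable_\<mu>: "measurable \<mu> = measurable Omega_M"
  by (intro ext measurable_cong_sets[OF sets_\<mu> refl])

lemma distr_shift_by_nat: "distr \<mu> Omega_M (shift_by (int k)) = \<mu>"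
proof (induction k)
  case 0
  then show ?case using distr_id2[OF sets_\<mu>[symmetric]] by (simp add: shift_by_0 id_def)
next
  case (Suc k)
  have "distr \<mu> Omega_M (shift_by (int (Suc k))) = distr \<mu> Omega_M (shift_by 1 \<circ> shift_by (int k))"
    by (simp add: shift_by_shift_by comp_def add.commute)
  also have "\<dots> = distr (distr \<mu> Omega_M (shift_by (int k))) Omega_M (shift_by 1)"
    by (rule distr_distr[symmetric]) (auto simp: measurable_\<mu> measurable_shift_by_Omega_M)
  also have "\<dots> = \<mu>"
    using Suc stationary by (simp add: stationary_def shift_eq_shift_by)
  finally show ?case .
qed

lemma prob_space_joint: "prob_space (joint \<mu>)"
  unfolding joint_def by (rule prob_space_pair[OF prob_space prob_space_U_M])

lemma space_joint: "space (joint \<mu>) = space \<mu> \<times> UNIV"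
  unfolding joint_def by (simp add: space_pair_measure space_U_M)

lemma pred_arrow_joint: "Measurable.pred (joint \<mu>) (\<lambda>p. arrow (fst p) (snd p) x j)"
proof -
  have "(\<lambda>p. fst p (x, j)) \<in> borel_measurable (joint \<mu>)"
    unfolding joint_def
    by (rule measurable_compose[OF measurable_fst]) (simp add: measurable_\<mu> measurable_component_Omega_M)
  moreover have "(\<lambda>p. snd p (x, j)) \<in> borel_measurable (joint \<mu>)"
    unfolding joint_def
    by (rule measurable_compose[OF measurable_snd]) (simp add: measurable_component_U_M)
  ultimately show ?thesis unfolding arrow_def pred_def by (rule borel_measurable_less[rotated])
qed

definition Survive_from :: "nat \<Rightarrow> (((int \<times> nat) \<Rightarrow> real) \<times> ((int \<times> nat) \<Rightarrow> real)) set" where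
  "Survive_from k = {p \<in> space (joint \<mu>). snd p \<in> survive_from (fst p) k}"

definition Survive_io :: "(((int \<times> nat) \<Rightarrow> real) \<times> ((int \<times> nat) \<Rightarrow> real)) set" where
  "Survive_io = {p \<in> space (joint \<mu>). snd p \<in> survive_io (fst p)}"

lemma sets_Survive_from: "Survive_from k \<in> sets (joint \<mu>)"
proof -
  have "Measurable.pred (joint \<mu>)
      (\<lambda>p. \<forall>n. 0 < Zplus_field (\<lambda>x. arrow (fst p) (snd p) (x + int k)) 1 n)"
    by (rule pred_survives[where a="\<lambda>p x. arrow (fst p) (snd p) (x + int k)"]) (rule pred_arrow_joint)
  moreover have "Survive_from k = {p \<in> space (joint \<mu>).
      \<forall>n. 0 < Zplus_field (\<lambda>x. arrow (fst p) (snd p) (x + int k)) 1 n}"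
    unfolding Survive_from_def survive_from_def by blast
  ultimately show ?thesis unfolding pred_def by (simp only:)
qed

lemma sets_Survive_io: "Survive_io \<in> sets (joint \<mu>)"
proof -
  have "Measurable.pred (joint \<mu>)
      (\<lambda>p. \<forall>m. \<exists>k\<ge>m. \<forall>n. 0 < Zplus_field (\<lambda>x. arrow (fst p) (snd p) (x + int k)) 1 n)"
    by (rule pred_survives_infinitely_often[where s=0]) (rule pred_arrow_joint)
  moreover have "Survive_io = {p \<in> space (joint \<mu>).
      \<forall>m. \<exists>k\<ge>m. \<forall>n. 0 < Zplus_field (\<lambda>x. arrow (fst p) (snd p) (x + int k)) 1 n}"
    unfolding Survive_io_def survive_io_def survive_from_def by blast
  ultimately show ?thesis unfolding pred_def by (simp only:)
qed

lemma emeasure_joint_sections: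
  assumes "A \<in> sets (joint \<mu>)"
  shows "emeasure (joint \<mu>) A = (\<integral>\<^sup>+\<omega>. emeasure U_M (Pair \<omega> -` A) \<partial>\<mu>)"
  using assms unfolding joint_def
  by (intro sigma_finite_measure.emeasure_pair_measure_alt prob_space_imp_sigma_finite prob_space_U_M)

lemma measurable_emeasure_sections:
  assumes "A \<in> sets (joint \<mu>)"
  shows "(\<lambda>\<omega>. emeasure U_M (Pair \<omega> -` A)) \<in> borel_measurable \<mu>"
  using assms unfolding joint_def
  by (intro sigma_finite_measure.measurable_emeasure_Pair prob_space_imp_sigma_finite prob_space_U_M)

lemma Survive_from_section: "\<omega> \<in> space \<mu> \<Longrightarrow> Pair \<omega> -` Survive_from k = survive_from \<omega> k"
  by (auto simp: Survive_from_def space_joint)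

lemma Survive_io_section: "\<omega> \<in> space \<mu> \<Longrightarrow> Pair \<omega> -` Survive_io = survive_io \<omega>"
  by (auto simp: Survive_io_def space_joint)

lemma PS_1_eq: "PS \<mu> 1 = measure (joint \<mu>) (Survive_from 0)"
  unfolding PS_def Survive_from_def survive_from_def by (simp add: Zplus_eq_Zplus_field)

lemma emeasure_Survive_from:
  "emeasure (joint \<mu>) (Survive_from k) = (\<integral>\<^sup>+\<omega>. emeasure U_M (survive_from \<omega> k) \<partial>\<mu>)"
  unfolding emeasure_joint_sections[OF sets_Survive_from]
  by (rule nn_integral_cong) (simp add: Survive_from_section)

lemma measure_Survive_from: "measure (joint \<mu>) (Survive_from k) = PS \<mu> 1"
proof -
  have "(\<lambda>\<omega>. emeasure U_M (Pair \<omega> -` Survive_from 0)) \<in> borel_measurable \<mu>"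
    by (rule measurable_emeasure_sections[OF sets_Survive_from])
  then have "(\<lambda>\<omega>. emeasure U_M (survive_from \<omega> 0)) \<in> borel_measurable \<mu>"
    by (rule measurable_cong[THEN iffD1, rotated]) (simp add: Survive_from_section)
  then have meas: "(\<lambda>\<omega>. emeasure U_M (survive_from \<omega> 0)) \<in> borel_measurable Omega_M"
    by (simp add: measurable_\<mu>)
  have "emeasure (joint \<mu>) (Survive_from k)
      = (\<integral>\<^sup>+\<omega>. emeasure U_M (survive_from (shift_by (int k) \<omega>) 0) \<partial>\<mu>)"
    unfolding emeasure_Survive_from
  proof (rule nn_integral_cong)
    fix \<omega>
    show "emeasure U_M (survive_from \<omega> k) = emeasure U_M (survive_from (shift_by (int k) \<omega>) 0)"
      using emeasure_U_M_vimage_shift_by[OF sets_survive_from, of "int k" "shift_by (int k) \<omega>" 0]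
      by (simp add: survive_from_shift_by)
  qed
  also have "\<dots> = (\<integral>\<^sup>+\<omega>. emeasure U_M (survive_from \<omega> 0) \<partial>distr \<mu> Omega_M (shift_by (int k)))"
    by (rule nn_integral_distr[symmetric]) (simp_all add: measurable_\<mu> measurable_shift_by_Omega_M meas)
  also have "\<dots> = emeasure (joint \<mu>) (Survive_from 0)"
    unfolding distr_shift_by_nat emeasure_Survive_from ..
  finally show ?thesis unfolding PS_1_eq measure_def by simp
qed

text \<open>By the 0-1 law the fibre measure of survive_io is 0 or 1, so Survive_io has the measure of
  this shift-invariant set of environments, to which ergodicity applies.\<close>

definition good_env :: "((int \<times> nat) \<Rightarrow> real) set" where
  "good_env = {\<omega> \<in> space \<mu>. emeasure U_M (survive_io \<omega>) = 1}"

lemma sets_good_env: "good_env \<in> sets \<mu>"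
proof -
  have "(\<lambda>\<omega>. emeasure U_M (Pair \<omega> -` Survive_io)) \<in> borel_measurable \<mu>"
    by (rule measurable_emeasure_sections[OF sets_Survive_io])
  then have "(\<lambda>\<omega>. emeasure U_M (survive_io \<omega>)) \<in> borel_measurable \<mu>"
    by (rule measurable_cong[THEN iffD1, rotated]) (simp add: Survive_io_section)
  from measurable_sets[OF this, of "{1}"] show ?thesis
    unfolding good_env_def by (simp add: vimage_def Int_def conj_commute)
qed

lemma shift_invariant_good_env: "shift -` good_env \<inter> space \<mu> = good_env"
proof -
  have "shift_by 1 \<omega> \<in> space \<mu>" if "\<omega> \<in> space \<mu>" for \<omega>
    using that measurable_space[OF measurable_shift_by_Omega_M] by (simp add: space_\<mu>)
  moreover have "emeasure U_M (survive_io (shift_by 1 \<omega>)) = emeasure U_M (survive_io \<omega>)" for \<omega>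
    using emeasure_U_M_vimage_shift_by[OF sets_survive_io, of 1 "shift_by 1 \<omega>"]
    by (simp add: survive_io_shift_by_1)
  ultimately show ?thesis unfolding good_env_def shift_eq_shift_by by auto
qed

lemma emeasure_Survive_io: "emeasure (joint \<mu>) Survive_io = emeasure \<mu> good_env"
proof -
  have "emeasure (joint \<mu>) Survive_io = (\<integral>\<^sup>+\<omega>. indicator good_env \<omega> \<partial>\<mu>)"
    unfolding emeasure_joint_sections[OF sets_Survive_io]
  proof (rule nn_integral_cong)
    fix \<omega> assume "\<omega> \<in> space \<mu>"
    then show "emeasure U_M (Pair \<omega> -` Survive_io) = indicator good_env \<omega>"
      using emeasure_survive_io_0_or_1[of \<omega>]
      by (auto simp: Survive_io_section good_env_def indicator_def)
  qed
  then show ?thesis using sets_good_env by simp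
qed

text \<open>Reverse Fatou: each restart event has probability PS 1, hence so has their limsup.\<close>

lemma PS_1_le_measure_Survive_io: "PS \<mu> 1 \<le> measure (joint \<mu>) Survive_io"
proof -
  interpret J: prob_space "joint \<mu>" by (rule prob_space_joint)
  define B where "B m = (\<Union>k\<in>{m..}. Survive_from k)" for m
  have sets_B: "range B \<subseteq> sets (joint \<mu>)"
    unfolding B_def using sets_Survive_from by (auto intro!: sets.countable_UN')
  have "decseq B" unfolding B_def decseq_def by (intro allI impI UN_mono) auto
  moreover have "(\<Inter>m. B m) = Survive_io"
    unfolding B_def Survive_io_def survive_io_def Survive_from_def by auto
  ultimately have "(\<lambda>m. measure (joint \<mu>) (B m)) \<longlonglongrightarrow> measure (joint \<mu>) Survive_io"
    using J.finite_Lim_measure_decseq[OF sets_B] by simp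
  moreover have "PS \<mu> 1 \<le> measure (joint \<mu>) (B m)" for m
    unfolding measure_Survive_from[of m, symmetric] B_def
    using sets_B B_def by (intro J.finite_measure_mono) auto
  ultimately show ?thesis by (intro LIMSEQ_le_const) auto
qed

lemma measure_Union_Survive_from:
  assumes "PS \<mu> 1 > 0"
  shows "measure (joint \<mu>) (\<Union>k. Survive_from k) = 1"
proof -
  interpret J: prob_space "joint \<mu>" by (rule prob_space_joint)
  have "measure \<mu> good_env = 0 \<or> measure \<mu> good_env = 1"
    using ergodic sets_good_env shift_invariant_good_env unfolding ergodic_def by blast
  moreover have "measure (joint \<mu>) Survive_io = measure \<mu> good_env"
    using emeasure_Survive_io by (simp add: measure_def)
  ultimately have "measure (joint \<mu>) Survive_io = 1"
    using PS_1_le_measure_Survive_io assms by auto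
  moreover have "Survive_io \<subseteq> (\<Union>k. Survive_from k)"
    unfolding Survive_io_def survive_io_def Survive_from_def by auto
  moreover have "(\<Union>k. Survive_from k) \<in> sets (joint \<mu>)"
    using sets_Survive_from by auto
  ultimately have "1 \<le> measure (joint \<mu>) (\<Union>k. Survive_from k)"
    by (metis J.finite_measure_mono)
  then show ?thesis using J.prob_le_1 by (simp add: antisym)
qed

definition Alive :: "nat \<Rightarrow> nat \<Rightarrow> (((int \<times> nat) \<Rightarrow> real) \<times> ((int \<times> nat) \<Rightarrow> real)) set" where
  "Alive K y = {p \<in> space (joint \<mu>). \<forall>y'\<ge>y. 0 < Zplus_field (arrow (fst p) (snd p)) y' K}"

definition Survive :: "nat \<Rightarrow> (((int \<times> nat) \<Rightarrow> real) \<times> ((int \<times> nat) \<Rightarrow> real)) set" where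
  "Survive y = {p \<in> space (joint \<mu>). \<forall>n. 0 < Zplus (fst p) (snd p) y n}"

lemma measurable_Zplus_field_joint:
  "(\<lambda>p. Zplus_field (arrow (fst p) (snd p)) y n) \<in> joint \<mu> \<rightarrow>\<^sub>M count_space UNIV"
  by (rule measurable_Zplus_field[where a="\<lambda>p. arrow (fst p) (snd p)"]) (rule pred_arrow_joint)

lemma sets_Alive: "Alive K y \<in> sets (joint \<mu>)"
proof -
  note measurable_Zplus_field_joint[measurable]
  have "Measurable.pred (joint \<mu>) (\<lambda>p. \<forall>y'\<ge>y. 0 < Zplus_field (arrow (fst p) (snd p)) y' K)"
    by measurable
  then show ?thesis unfolding pred_def Alive_def by (simp only:)
qed

lemma sets_Survive: "Survive y \<in> sets (joint \<mu>)"
proof -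
  note measurable_Zplus_field_joint[measurable]
  have "Measurable.pred (joint \<mu>) (\<lambda>p. \<forall>n. 0 < Zplus_field (arrow (fst p) (snd p)) y n)"
    by measurable
  moreover have "Survive y = {p \<in> space (joint \<mu>). \<forall>n. 0 < Zplus_field (arrow (fst p) (snd p)) y n}"
    unfolding Survive_def by (simp add: Zplus_eq_Zplus_field)
  ultimately show ?thesis unfolding pred_def by (simp only:)
qed

lemma measure_Alive_tendsto_1: "(\<lambda>y. measure (joint \<mu>) (Alive K y)) \<longlonglongrightarrow> 1"
proof -
  interpret J: prob_space "joint \<mu>" by (rule prob_space_joint)
  have "range (Alive K) \<subseteq> sets (joint \<mu>)" using sets_Alive by auto
  moreover have "incseq (Alive K)" unfolding Alive_def incseq_def by auto
  ultimately have "(\<lambda>y. measure (joint \<mu>) (Alive K y)) \<longlonglongrightarrow> measure (joint \<mu>) (\<Union>y. Alive K y)"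
    by (rule J.finite_Lim_measure_incseq)
  moreover have "measure (joint \<mu>) (\<Union>y. Alive K y) = measure (joint \<mu>) (space (joint \<mu>))"
  proof (rule J.finite_measure_eq_AE)
    show "AE p in joint \<mu>. p \<in> (\<Union>y. Alive K y) \<longleftrightarrow> p \<in> space (joint \<mu>)"
      using nondegenerate AE_space unfolding nondegenerate_def
    proof eventually_elim
      case (elim p)
      then show ?case
        using Zplus_field_eventually_ge[OF elim(1), of 1 K] unfolding Alive_def by (auto simp: Suc_le_eq)
    qed
  qed (use sets_Alive in auto)
  ultimately show ?thesis by (simp add: J.prob_space)
qed

lemma AE_Alive_Survive_from_imp_Survive:
  "AE p in joint \<mu>. p \<in> Alive K y \<inter> (\<Union>k\<le>K. Survive_from k) \<longrightarrow> p \<in> Survive y"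
  using nondegenerate unfolding nondegenerate_def
proof eventually_elim
  case (elim p)
  let ?a = "arrow (fst p) (snd p)"
  show ?case
  proof
    assume p: "p \<in> Alive K y \<inter> (\<Union>k\<le>K. Survive_from k)"
    then obtain k where "k \<le> K" "p \<in> Survive_from k" by auto
    then have "k \<le> K" "\<forall>n. 0 < Zplus_field (\<lambda>x. ?a (x + int k)) 1 n"
      by (simp_all add: Survive_from_def survive_from_def)
    moreover have "0 < Zplus_field ?a y K" using p by (simp add: Alive_def)
    ultimately have "\<forall>n. 0 < Zplus_field ?a y n"
      using Zplus_field_survives_by_comparison[OF elim] by blast
    then show "p \<in> Survive y" using p by (simp add: Survive_def Alive_def Zplus_eq_Zplus_field)
  qed
qed

lemma measure_UN_atMost_Survive_from_tendsto_1:
  assumes "PS \<mu> 1 > 0"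
  shows "(\<lambda>K. measure (joint \<mu>) (\<Union>k\<le>K. Survive_from k)) \<longlonglongrightarrow> 1"
proof -
  interpret J: prob_space "joint \<mu>" by (rule prob_space_joint)
  have "range (\<lambda>K. \<Union>k\<le>K. Survive_from k) \<subseteq> sets (joint \<mu>)"
    using sets_Survive_from by auto
  moreover have "incseq (\<lambda>K. \<Union>k\<le>K. Survive_from k)"
    unfolding incseq_def by (intro allI impI UN_mono) auto
  ultimately have "(\<lambda>K. measure (joint \<mu>) (\<Union>k\<le>K. Survive_from k))
      \<longlonglongrightarrow> measure (joint \<mu>) (\<Union>K. \<Union>k\<le>K. Survive_from k)"
    by (rule J.finite_Lim_measure_incseq)
  moreover have "(\<Union>K. \<Union>k\<le>K. Survive_from k) = (\<Union>k. Survive_from k)" by auto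
  ultimately show ?thesis using measure_Union_Survive_from[OF assms] by simp
qed

theorem PS_arbitrarily_close_to_1:
  assumes "PS \<mu> 1 > 0" "\<epsilon> > 0"
  shows "\<exists>y. PS \<mu> y > 1 - \<epsilon>"
proof -
  interpret J: prob_space "joint \<mu>" by (rule prob_space_joint)
  obtain K where K: "measure (joint \<mu>) (\<Union>k\<le>K. Survive_from k) > 1 - \<epsilon> / 2"
    using order_tendstoD(1)[OF measure_UN_atMost_Survive_from_tendsto_1[OF assms(1)], of "1 - \<epsilon> / 2"]
      assms(2)
    by (auto simp: eventually_sequentially)
  obtain y where y: "measure (joint \<mu>) (Alive K y) > 1 - \<epsilon> / 2"
    using order_tendstoD(1)[OF measure_Alive_tendsto_1, of "1 - \<epsilon> / 2"] assms(2)
    by (auto simp: eventually_sequentially)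
  have "measure (joint \<mu>) (Alive K y \<inter> (\<Union>k\<le>K. Survive_from k)) \<le> PS \<mu> y"
    unfolding PS_def using AE_Alive_Survive_from_imp_Survive sets_Survive
    by (intro J.finite_measure_mono_AE) (auto simp: Survive_def)
  moreover have "measure (joint \<mu>) (Alive K y) + measure (joint \<mu>) (\<Union>k\<le>K. Survive_from k) - 1
      \<le> measure (joint \<mu>) (Alive K y \<inter> (\<Union>k\<le>K. Survive_from k))"
    using sets_Alive sets_Survive_from by (intro J.prob_Int_ge) auto
  ultimately show ?thesis using K y by (intro exI[of _ y]) linarith
qed

end

theorem lemma4p3:
  fixes \<mu> :: "((int \<times> nat) \<Rightarrow> real) measure"
  assumes "prob_space \<mu>"
    and "stationary \<mu>"
    and "ergodic \<mu>"
    and "elliptic \<mu>"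
    and "nondegenerate \<mu>"
    and "PS \<mu> 1 > 0"
  shows "\<forall>\<epsilon>>0. \<exists>y. PS \<mu> y > 1 - \<epsilon>"
proof -
  interpret stationary_ergodic_environment \<mu>
    using assms(1-3,5) by (rule stationary_ergodic_environment.intro)
  show ?thesis using PS_arbitrarily_close_to_1[OF assms(6)] by blast
qed

end
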